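(* Let $A\in\mathbb{R}^{m\times d}$ have the phase retrieval property in $\mathbb{R}^d$. Then there is a Lebesgue measure zero set $N\subset\mathbb{R}^m$ such that for all $b\in\mathbb{R}_+^m\setminus N$, the problem $\min_{x\in\mathbb{R}^d}\|\,|Ax|-b\,\|^2$ has a unique solution up to sign.
   Context: $\|\cdot\|$ is the Euclidean norm, $|Ax|$ the entrywise absolute value, and $\mathbb{R}_+^m$ the nonnegative orthant. $A$ has the phase retrieval property in $\mathbb{R}^d$ if for all $x,y\in\mathbb{R}^d$, $|Ax|=|Ay|$ implies $x=\pm y$. Uniqueness means all minimizers are of the form $\pm x$ for a single $x$. *)

theory Defs
  imports "HOL-Analysis.Analysis"
begin

definition vabs :: "real ^ 'm \<Rightarrow> real ^ 'm" where
  "vabs v = (\<chi> i. \<bar>v $ i\<bar>)"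

definition phase_retrieval :: "real ^ 'd ^ 'm \<Rightarrow> bool" where
  "phase_retrieval A \<longleftrightarrow>
     (\<forall>x y. vabs (A *v x) = vabs (A *v y) \<longrightarrow> x = y \<or> x = - y)"

definition pr_loss :: "real ^ 'd ^ 'm \<Rightarrow> real ^ 'm \<Rightarrow> real ^ 'd \<Rightarrow> real" where
  "pr_loss A b x = (norm (vabs (A *v x) - b))\<^sup>2"

definition pr_minimizer :: "real ^ 'd ^ 'm \<Rightarrow> real ^ 'm \<Rightarrow> real ^ 'd \<Rightarrow> bool" where
  "pr_minimizer A b x \<longleftrightarrow> (\<forall>z. pr_loss A b x \<le> pr_loss A b z)"

end

theory Submission
  imports Defs "HOL-Library.Quadratic_Discriminant"
begin

(*
  Write B_s for A with the rows outside the sign pattern s negated. For b >= 0 the loss of x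
  is the smallest of the values norm (B_s x - b)^2, attained at the sign pattern of A x. So
  the optimal value is the smallest of the least-squares residuals r_s(b) of the finitely
  many B_s, and every minimizer is the least-squares solution for its own pattern.
  Each r_s is a quadratic form in b, so off the negligible set where two different forms
  r_s, r_t agree, minimizers x and y with patterns s and t have r_s = r_t identically. Then
  |A y| = B_t y has r_t = 0, hence r_s = 0, i.e. |A y| = B_s z for some z. As
  norm (B_s z - b)^2 is the loss of y, the optimal value r_s(b), z is the least-squares
  solution for s, which is x. So |A y| = B_s x = |A x|, and phase retrieval gives y = x or
  y = -x.
*)

lemma negligible_zeros_quadratic_along_line:
  fixes q \<beta> :: "'a::euclidean_space \<Rightarrow> real"
  assumes expand: "\<And>w t. q (w + t *\<^sub>R v) = q v * t\<^sup>2 + \<beta> w * t + q w"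
    and lead: "q v \<noteq> 0"
    and diff_q: "\<And>x. q differentiable at x"
    and diff_\<beta>: "\<And>x. \<beta> differentiable at x"
  shows "negligible {x. q x = 0}"
proof -
  txt \<open>Every line parallel to \<open>v\<close> meets the zero set in the at most two roots of a
    quadratic; parametrising these roots over the hyperplane orthogonal to \<open>v\<close>
    exhibits the zero set as a differentiable image of a negligible set.\<close>
  have "v \<noteq> 0"
    using expand[of 0 1] expand[of 0 "-1"] lead by auto
  define H where "H = {w. v \<bullet> w = 0}"
  have H: "negligible H"
    unfolding H_def using \<open>v \<noteq> 0\<close> by (rule negligible_hyperplane[OF disjI1])
  define \<Delta> where "\<Delta> w = discrim (q v) (\<beta> w) (q w)" for w
  define root where
    "root \<sigma> w = w + ((- \<beta> w + \<sigma> * sqrt (\<Delta> w)) / (2 * q v)) *\<^sub>R v" for \<sigma> w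
  have cover:
    "{x. q x = 0} \<subseteq> (\<Union>\<sigma>\<in>{-1, 1}. root \<sigma> ` (H \<inter> {w. 0 < \<Delta> w})) \<union> root 0 ` H"
    (is "_ \<subseteq> ?roots")
  proof
    fix x assume "x \<in> {x. q x = 0}"
    define t where "t = (v \<bullet> x) / (v \<bullet> v)"
    define w where "w = x - t *\<^sub>R v"
    have "w \<in> H"
      using \<open>v \<noteq> 0\<close> by (simp add: H_def w_def t_def inner_diff_right)
    have x: "x = w + t *\<^sub>R v"
      by (simp add: w_def)
    have "q v * t\<^sup>2 + \<beta> w * t + q w = 0"
      using \<open>x \<in> _\<close> by (simp add: x expand)
    then have "0 \<le> \<Delta> w"
      and t: "t = (- \<beta> w + sqrt (\<Delta> w)) / (2 * q v) \<or> t = (- \<beta> w - sqrt (\<Delta> w)) / (2 * q v)"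
      using discriminant_iff[OF lead] by (auto simp: \<Delta>_def)
    show "x \<in> ?roots"
    proof (cases "\<Delta> w = 0")
      case True
      then have "x = root 0 w"
        using t by (auto simp: x root_def)
      then show ?thesis
        using \<open>w \<in> H\<close> by blast
    next
      case False
      then have "w \<in> H \<inter> {w. 0 < \<Delta> w}"
        using \<open>w \<in> H\<close> \<open>0 \<le> \<Delta> w\<close> by simp
      moreover have "x = root 1 w \<or> x = root (-1) w"
        using t by (auto simp: x root_def)
      ultimately show ?thesis
        by blast
    qed
  qed
  have diff_\<Delta>: "\<Delta> differentiable at w" for w
    unfolding \<Delta>_def discrim_def using diff_q diff_\<beta> by simp
  have "root \<sigma> differentiable_on {w. 0 < \<Delta> w}" for \<sigma>
  proof (rule differentiable_at_imp_differentiable_on)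
    fix w assume "w \<in> {w. 0 < \<Delta> w}"
    then have "(\<lambda>w. sqrt (\<Delta> w)) differentiable at w"
      by (metis DERIV_real_sqrt diff_\<Delta> differentiable_compose mem_Collect_eq
          real_differentiable_def)
    then show "root \<sigma> differentiable at w"
      unfolding root_def using diff_\<beta> lead by simp
  qed
  then have "negligible (root \<sigma> ` (H \<inter> {w. 0 < \<Delta> w}))" for \<sigma>
    using H by (blast intro: negligible_differentiable_image_negligible negligible_subset
        differentiable_on_subset)
  moreover have "root 0 differentiable_on H"
    unfolding root_def using diff_\<beta> lead
    by (intro differentiable_at_imp_differentiable_on) simp
  then have "negligible (root 0 ` H)"
    by (rule negligible_differentiable_image_negligible[OF order_refl H])
  ultimately show ?thesis
    by (intro negligible_subset[OF _ cover]) auto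
qed

lemma negligible_norm_eq_linear:
  fixes K L :: "'a::euclidean_space \<Rightarrow> 'b::real_inner"
  assumes "linear K" "linear L" and "norm (K v) \<noteq> norm (L v)"
  shows "negligible {x. norm (K x) = norm (L x)}"
proof -
  define q where "q x = K x \<bullet> K x - L x \<bullet> L x" for x
  define \<beta> where "\<beta> w = 2 * (K w \<bullet> K v - L w \<bullet> L v)" for w
  have "q (w + t *\<^sub>R v) = q v * t\<^sup>2 + \<beta> w * t + q w" for w t
    by (simp add: q_def \<beta>_def assms linear_add linear_scale inner_add_left inner_add_right
        inner_commute algebra_simps power2_eq_square)
  moreover have "q v \<noteq> 0"
    using assms(3) by (simp add: q_def flip: power2_norm_eq_inner)
  moreover have "q differentiable at x" "\<beta> differentiable at x" for x
    unfolding q_def \<beta>_def using assms(1,2) by (simp_all add: linear_imp_differentiable)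
  ultimately have "negligible {x. q x = 0}"
    by (rule negligible_zeros_quadratic_along_line)
  moreover have "{x. norm (K x) = norm (L x)} = {x. q x = 0}"
    by (auto simp: q_def norm_eq)
  ultimately show ?thesis
    by simp
qed

lemma matrix_inv_right:
  fixes A :: "'a::semiring_1^'n^'m"
  assumes "invertible A"
  shows "A ** matrix_inv A = mat 1"
  using someI_ex[OF assms[unfolded invertible_def]] by (simp add: matrix_inv_def)

lemma invertible_gram_matrix:
  fixes B :: "real^'n^'m"
  assumes "inj ((*v) B)"
  shows "invertible (transpose B ** B)"
proof -
  have "z = 0" if "(transpose B ** B) *v z = 0" for z
  proof -
    have "(B *v z) \<bullet> (B *v z) = 0"
      using that by (simp flip: dot_lmul_matrix matrix_vector_mul_assoc)
    then show "z = 0"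
      using assms by (metis inj_eq inner_eq_zero_iff matrix_vector_mult_0_right)
  qed
  then show ?thesis
    by (simp add: invertible_left_inverse matrix_left_invertible_ker)
qed

definition lsq_inverse :: "real^'n^'m \<Rightarrow> real^'m^'n" where
  "lsq_inverse B = matrix_inv (transpose B ** B) ** transpose B"

definition lsq_residual :: "real^'n^'m \<Rightarrow> real^'m \<Rightarrow> real" where
  "lsq_residual B b = (norm (B *v (lsq_inverse B *v b) - b))\<^sup>2"

lemma lsq_normal_equation:
  fixes B :: "real^'n^'m"
  assumes "inj ((*v) B)"
  shows "transpose B *v (B *v (lsq_inverse B *v b)) = transpose B *v b"
  using matrix_inv_right[OF invertible_gram_matrix[OF assms]]
  by (simp add: lsq_inverse_def matrix_vector_mul_assoc matrix_mul_assoc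
      del: transpose_matrix_vector)

lemma lsq_pythagoras:
  fixes B :: "real^'n^'m"
  assumes "inj ((*v) B)"
  shows "(norm (B *v x - b))\<^sup>2 =
    (norm (B *v (x - lsq_inverse B *v b)))\<^sup>2 + lsq_residual B b"
proof -
  define r where "r = B *v (lsq_inverse B *v b) - b"
  have "B *v x - b = B *v (x - lsq_inverse B *v b) + r"
    by (simp add: r_def matrix_vector_mult_diff_distrib)
  moreover have "(B *v z) \<bullet> r = z \<bullet> (transpose B *v r)" for z
    by (metis dot_lmul_matrix vector_transpose_matrix)
  moreover have "transpose B *v r = 0"
    using lsq_normal_equation[OF assms, of b]
    by (simp add: r_def matrix_vector_mult_diff_distrib del: transpose_matrix_vector)
  ultimately show ?thesis
    by (simp add: lsq_residual_def r_def[symmetric] power2_norm_eq_inner inner_add_left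
        inner_add_right inner_commute)
qed

lemma lsq_residual_le:
  fixes B :: "real^'n^'m"
  assumes "inj ((*v) B)"
  shows "lsq_residual B b \<le> (norm (B *v x - b))\<^sup>2"
  using lsq_pythagoras[OF assms] by simp

lemma lsq_unique:
  fixes B :: "real^'n^'m"
  assumes "inj ((*v) B)" and "(norm (B *v x - b))\<^sup>2 \<le> lsq_residual B b"
  shows "x = lsq_inverse B *v b"
proof -
  have "B *v (x - lsq_inverse B *v b) = 0"
    using assms(2) lsq_pythagoras[OF assms(1), of x b] by simp
  then show ?thesis
    using assms(1) by (metis eq_iff_diff_eq_0 injD matrix_vector_mult_0_right)
qed

lemma linear_lsq_error: "linear (\<lambda>b. B *v (lsq_inverse B *v b) - b)"
  by (intro linear_compose_sub linear_ident)
    (simp add: matrix_vector_mul_assoc matrix_vector_mul_linear)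

lemma phase_retrieval_imp_inj:
  assumes "phase_retrieval A"
  shows "inj ((*v) A)"
proof (rule linear_injective_0[OF matrix_vector_mul_linear, THEN iffD2], intro allI impI)
  fix x assume "A *v x = 0"
  then have "vabs (A *v x) = vabs (A *v 0)"
    by simp
  then show "x = 0"
    using assms unfolding phase_retrieval_def by fastforce
qed

definition sign_flip :: "('m \<Rightarrow> bool) \<Rightarrow> real^'n^'m \<Rightarrow> real^'n^'m" where
  "sign_flip s A = (\<chi> i. if s i then A $ i else - A $ i)"

definition sign_pattern :: "real^'n^'m \<Rightarrow> real^'n \<Rightarrow> 'm \<Rightarrow> bool" where
  "sign_pattern A x i \<longleftrightarrow> 0 \<le> (A *v x) $ i"

lemma sign_flip_mult:
  "(sign_flip s A *v x) $ i = (if s i then (A *v x) $ i else - (A *v x) $ i)"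
  by (simp add: sign_flip_def matrix_vector_mult_def sum_negf)

lemma inj_sign_flip:
  assumes "inj ((*v) A)"
  shows "inj ((*v) (sign_flip s A))"
proof (rule linear_injective_0[OF matrix_vector_mul_linear, THEN iffD2], intro allI impI)
  fix x assume x: "sign_flip s A *v x = 0"
  have "(A *v x) $ i = 0" for i
    using arg_cong[OF x, of "\<lambda>v. v $ i"]
    by (simp add: sign_flip_mult split: if_splits)
  then have "A *v x = 0"
    by (simp add: vec_eq_iff)
  then show "x = 0"
    using assms by (metis injD matrix_vector_mult_0_right)
qed

lemma sign_flip_sign_pattern: "sign_flip (sign_pattern A x) A *v x = vabs (A *v x)"
  by (simp add: vec_eq_iff sign_flip_mult sign_pattern_def vabs_def)

lemma norm_vabs_diff_le:
  fixes y z b :: "real^'m"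
  assumes "\<forall>i. 0 \<le> b $ i" and "\<forall>i. \<bar>y $ i\<bar> = \<bar>z $ i\<bar>"
  shows "norm (vabs z - b) \<le> norm (y - b)"
  unfolding norm_vec_def
proof (rule L2_set_mono)
  fix i
  have "\<bar>\<bar>z $ i\<bar> - \<bar>b $ i\<bar>\<bar> \<le> \<bar>y $ i - b $ i\<bar>"
    using assms(2) abs_triangle_ineq3[of "y $ i" "b $ i"] by simp
  then show "norm ((vabs z - b) $ i) \<le> norm ((y - b) $ i)"
    using assms(1) by (simp add: vabs_def)
qed simp

lemma pr_loss_le_sign_flip:
  assumes "\<forall>i. 0 \<le> b $ i"
  shows "pr_loss A b x \<le> (norm (sign_flip s A *v x - b))\<^sup>2"
  unfolding pr_loss_def
  using norm_vabs_diff_le[OF assms, of "sign_flip s A *v x" "A *v x"]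
  by (simp add: sign_flip_mult power_mono)

lemma pr_loss_sign_pattern:
  "pr_loss A b x = (norm (sign_flip (sign_pattern A x) A *v x - b))\<^sup>2"
  by (simp add: pr_loss_def sign_flip_sign_pattern)

definition min_residual :: "real^'n^'m \<Rightarrow> real^'m \<Rightarrow> real" where
  "min_residual A b = (MIN s. lsq_residual (sign_flip s A) b)"

lemma min_residual_le: "min_residual A b \<le> lsq_residual (sign_flip s A) b"
  by (simp add: min_residual_def)

lemma ex_min_residual: "\<exists>s. lsq_residual (sign_flip s A) b = min_residual A b"
  unfolding min_residual_def
  by (metis (mono_tags) Min_in finite UNIV_not_empty empty_is_image finite_imageI imageE)

lemma min_residual_le_pr_loss:
  assumes "inj ((*v) A)"
  shows "min_residual A b \<le> pr_loss A b x"
  using min_residual_le[of A b "sign_pattern A x"] lsq_residual_le[OF inj_sign_flip[OF assms]]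
  by (metis order_trans pr_loss_sign_pattern)

lemma ex_pr_loss_le_min_residual:
  assumes "\<forall>i. 0 \<le> b $ i"
  shows "\<exists>x. pr_loss A b x \<le> min_residual A b"
proof -
  obtain s where "lsq_residual (sign_flip s A) b = min_residual A b"
    using ex_min_residual by blast
  then show ?thesis
    using pr_loss_le_sign_flip[OF assms] unfolding lsq_residual_def by metis
qed

lemma ex_pr_minimizer:
  assumes "inj ((*v) A)" and "\<forall>i. 0 \<le> b $ i"
  shows "\<exists>x. pr_minimizer A b x"
  using ex_pr_loss_le_min_residual[OF assms(2)] min_residual_le_pr_loss[OF assms(1)]
  unfolding pr_minimizer_def by (meson order_trans)

lemma pr_minimizer_loss:
  assumes "inj ((*v) A)" and "\<forall>i. 0 \<le> b $ i" and "pr_minimizer A b x"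
  shows "pr_loss A b x = min_residual A b"
  using ex_pr_loss_le_min_residual[OF assms(2)] min_residual_le_pr_loss[OF assms(1)] assms(3)
  unfolding pr_minimizer_def by (meson order_antisym order_trans)

lemma pr_minimizer_residual:
  assumes "inj ((*v) A)" and "\<forall>i. 0 \<le> b $ i" and "pr_minimizer A b x"
  shows "lsq_residual (sign_flip (sign_pattern A x) A) b = min_residual A b"
  using lsq_residual_le[OF inj_sign_flip[OF assms(1)]] min_residual_le pr_minimizer_loss[OF assms]
  by (metis order_antisym pr_loss_sign_pattern)

lemma pr_minimizer_eq_lsq_inverse:
  assumes "inj ((*v) A)" and "\<forall>i. 0 \<le> b $ i" and "pr_minimizer A b x"
  shows "x = lsq_inverse (sign_flip (sign_pattern A x) A) *v b"
  using pr_minimizer_loss[OF assms] pr_minimizer_residual[OF assms]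
  by (intro lsq_unique inj_sign_flip assms(1)) (simp add: pr_loss_sign_pattern)

lemma pr_minimizer_unique_up_to_sign:
  assumes pr: "phase_retrieval A" and b: "\<forall>i. 0 \<le> b $ i"
    and x: "pr_minimizer A b x" and y: "pr_minimizer A b y"
    and same_residual: "lsq_residual (sign_flip (sign_pattern A x) A) =
                        lsq_residual (sign_flip (sign_pattern A y) A)"
  shows "y = x \<or> y = - x"
proof -
  let ?F = "sign_flip (sign_pattern A x) A" and ?G = "sign_flip (sign_pattern A y) A"
  have inj: "inj ((*v) A)"
    using pr by (rule phase_retrieval_imp_inj)
  define c where "c = vabs (A *v y)"
  have "lsq_residual ?G c \<le> 0"
    using lsq_residual_le[OF inj_sign_flip[OF inj], of "sign_pattern A y" c y]
    by (simp add: c_def sign_flip_sign_pattern)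
  then have "lsq_residual ?F c = 0"
    using same_residual by (simp add: lsq_residual_def)
  then have c: "?F *v (lsq_inverse ?F *v c) = c"
    by (simp add: lsq_residual_def)
  have "(norm (?F *v (lsq_inverse ?F *v c) - b))\<^sup>2 = lsq_residual ?F b"
    unfolding c using pr_minimizer_loss[OF inj b y] pr_minimizer_residual[OF inj b x]
    by (simp add: pr_loss_def c_def)
  then have "lsq_inverse ?F *v c = lsq_inverse ?F *v b"
    by (intro lsq_unique[OF inj_sign_flip[OF inj]]) simp
  also have "\<dots> = x"
    using pr_minimizer_eq_lsq_inverse[OF inj b x] by (rule sym)
  finally have "lsq_inverse ?F *v c = x" .
  then have "vabs (A *v y) = vabs (A *v x)"
    using c by (simp add: c_def sign_flip_sign_pattern)
  then show ?thesis
    using pr unfolding phase_retrieval_def by blast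
qed

definition residual_ties :: "real^'n^'m \<Rightarrow> (real^'m) set" where
  "residual_ties A = {b. \<exists>s t. lsq_residual (sign_flip s A) \<noteq> lsq_residual (sign_flip t A) \<and>
                             lsq_residual (sign_flip s A) b = lsq_residual (sign_flip t A) b}"

lemma negligible_residual_ties: "negligible (residual_ties A)"
proof -
  let ?tie = "\<lambda>(s, t). {b. lsq_residual (sign_flip s A) b = lsq_residual (sign_flip t A) b}"
  have "residual_ties A =
    \<Union> (?tie ` {(s, t). lsq_residual (sign_flip s A) \<noteq> lsq_residual (sign_flip t A)})"
    by (auto simp: residual_ties_def)
  moreover have "negligible (?tie (s, t))"
    if neq: "lsq_residual (sign_flip s A) \<noteq> lsq_residual (sign_flip t A)" for s t
  proof -
    obtain v where "lsq_residual (sign_flip s A) v \<noteq> lsq_residual (sign_flip t A) v"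
      using neq by (auto simp: fun_eq_iff)
    then have "negligible {b. norm (sign_flip s A *v (lsq_inverse (sign_flip s A) *v b) - b) =
                             norm (sign_flip t A *v (lsq_inverse (sign_flip t A) *v b) - b)}"
      by (intro negligible_norm_eq_linear linear_lsq_error) (auto simp: lsq_residual_def)
    then show ?thesis
      by (simp add: lsq_residual_def)
  qed
  ultimately show ?thesis
    by (auto intro!: negligible_Union)
qed

theorem theorem4p1:
  fixes A :: "real ^ 'd ^ 'm"
  assumes "phase_retrieval A"
  shows "\<exists>N :: (real ^ 'm) set. N \<in> null_sets lebesgue \<and>
           (\<forall>b. (\<forall>i. 0 \<le> b $ i) \<and> b \<notin> N \<longrightarrow>
              (\<exists>x. pr_minimizer A b x \<and>
                   (\<forall>y. pr_minimizer A b y \<longrightarrow> y = x \<or> y = - x)))"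
proof (rule exI[of _ "residual_ties A"], intro conjI allI impI)
  show "residual_ties A \<in> null_sets lebesgue"
    using negligible_residual_ties negligible_iff_null_sets by blast
  have inj: "inj ((*v) A)"
    using assms by (rule phase_retrieval_imp_inj)
  fix b :: "real^'m"
  assume "(\<forall>i. 0 \<le> b $ i) \<and> b \<notin> residual_ties A"
  then have b: "\<forall>i. 0 \<le> b $ i" and untied: "b \<notin> residual_ties A"
    by auto
  obtain x where x: "pr_minimizer A b x"
    using ex_pr_minimizer[OF inj b] by blast
  show "\<exists>x. pr_minimizer A b x \<and> (\<forall>y. pr_minimizer A b y \<longrightarrow> y = x \<or> y = - x)"
  proof (intro exI[of _ x] conjI allI impI)
    show "pr_minimizer A b x"
      by (rule x)
    fix y assume y: "pr_minimizer A b y"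
    let ?r = "\<lambda>z. lsq_residual (sign_flip (sign_pattern A z) A)"
    have "?r x b = ?r y b"
      using pr_minimizer_residual[OF inj b x] pr_minimizer_residual[OF inj b y] by simp
    then have "?r x = ?r y"
      using untied unfolding residual_ties_def by blast
    then show "y = x \<or> y = - x"
      by (rule pr_minimizer_unique_up_to_sign[OF assms b x y])
  qed
qed

end
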